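(* Let $G=(V,E,H)$ be a HEDG and $X,Y,Z\subseteq V$. Then the following are equivalent: (i) $X\perp^\sigma_G Y\mid Z$; (ii) $X\perp^\sigma_{G^{\mathrm{aug}}}Y\mid Z$; (iii) $X\perp^d_{G^{\mathrm{acy}}}Y\mid Z$; (iv) $X\perp^d_{G^{\mathrm{acag}}}Y\mid Z$; (v) $X\perp^d_{(G^{\mathrm{aug}})^{\mathrm{acy}}}Y\mid Z$; (vi) $X\perp^d_{(G^{\mathrm{acy}})^{\mathrm{aug}}}Y\mid Z$.
   Context: HEDG $G=(V,E,H)$: $V$ finite, $E\subseteq V\times V$ (self-loops allowed), $H$ a simplicial complex on $V$ (contains singletons, closed under subsets), $\tilde H$ its maximal elements; $v\leftrightarrow w$ for distinct $v,w$ with $\{v,w\}\in H$. $\mathrm{Anc}^G,\mathrm{Desc}^G$ (including the node), $\mathrm{Sc}^G(v)=\mathrm{Anc}^G(v)\cap\mathrm{Desc}^G(v)$. A directed graph is regarded as a HEDG whose hyperedges are only singletons. Augmentation $G^{\mathrm{aug}}$: directed graph on $V\cup\{e_F:F\in\tilde H\}$ with edges $E$ together with $e_F\to v$ for all $v\in F$. Acyclification $G^{\mathrm{acy}}=(V,E^{\mathrm{acy}},H^{\mathrm{acy}})$: $v\to w\in E^{\mathrm{acy}}$ iff $v\notin\mathrm{Sc}^G(w)$ and some $w'\in\mathrm{Sc}^G(w)$ has $(v,w')\in E$; $H^{\mathrm{acy}}=\{F'\subseteq\bigcup_{v\in F}\mathrm{Sc}^G(v):F\in H\}$. $(G^{\mathrm{aug}})^{\mathrm{acy}}$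 is the acyclification of $G^{\mathrm{aug}}$, $(G^{\mathrm{acy}})^{\mathrm{aug}}$ the augmentation of $G^{\mathrm{acy}}$, and $G^{\mathrm{acag}}$ is the directed graph with the node set and directed edges of $(G^{\mathrm{aug}})^{\mathrm{acy}}$ but only singleton hyperedges. Paths: node sequences (repetitions allowed, $n\ge1$) with consecutive nodes joined by $\to,\leftarrow,\leftrightarrow$. d-separation $X\perp^d Y\mid Z$: every path between $X$ and $Y$ is $Z$-blocked, meaning an endnode is in $Z$, or an intermediate collider (both adjacent edges have an arrowhead at it) is not an ancestor of $Z$, or an intermediate non-collider is in $Z$. $\sigma$-separation $X\perp^\sigma Y\mid Z$: every path between $X$ and $Y$ is $Z$-$\sigma$-blocked, meaning an endnode is in $Z$, or an intermediate collider is not an ancestor of $Z$, or an intermediate non-collider $v_i\in Z$ has on the path a directed edge $v_i\to v_{i\pm1}$ pointing to a node outside the strongly connected component of $v_i$. *)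

theory Defs
  imports Main
begin

datatype 'a hedg = HEDG (nodes: "'a set") (dedges: "('a \<times> 'a) set") (hedges: "'a set set")

definition wf_hedg :: "'a hedg \<Rightarrow> bool" where
  "wf_hedg G \<longleftrightarrow> finite (nodes G) \<and> dedges G \<subseteq> nodes G \<times> nodes G
     \<and> hedges G \<subseteq> Pow (nodes G)
     \<and> (\<forall>v\<in>nodes G. {v} \<in> hedges G)
     \<and> (\<forall>F\<in>hedges G. \<forall>F'. F' \<subseteq> F \<longrightarrow> F' \<in> hedges G)"

definition maxhedges :: "'a hedg \<Rightarrow> 'a set set" where
  "maxhedges G = {F \<in> hedges G. \<not> (\<exists>F'\<in>hedges G. F \<subset> F')}"

text \<open>Trivial simplicial complex (only singletons and the empty set): how a directed
  graph is regarded as a HEDG.\<close>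
definition singleton_complex :: "'a set \<Rightarrow> 'a set set" where
  "singleton_complex V = {F. F \<subseteq> V \<and> (\<forall>a\<in>F. \<forall>b\<in>F. a = b)}"

definition anc :: "'a hedg \<Rightarrow> 'a \<Rightarrow> 'a set" where
  "anc G v = {u. (u, v) \<in> (dedges G)\<^sup>*}"

definition desc :: "'a hedg \<Rightarrow> 'a \<Rightarrow> 'a set" where
  "desc G v = {w. (v, w) \<in> (dedges G)\<^sup>*}"

definition sc :: "'a hedg \<Rightarrow> 'a \<Rightarrow> 'a set" where
  "sc G v = anc G v \<inter> desc G v"

definition anc_set :: "'a hedg \<Rightarrow> 'a set \<Rightarrow> 'a set" where
  "anc_set G Z = (\<Union>z\<in>Z. anc G z)"

text \<open>Nodes of the augmented graph: \<open>Inl v\<close> for \<open>v \<in> V\<close>, \<open>Inr F\<close> for the new node \<open>e_F\<close>.\<close>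
definition aug :: "'a hedg \<Rightarrow> ('a + 'a set) hedg" where
  "aug G = (let N = Inl ` nodes G \<union> Inr ` maxhedges G in
     HEDG N
       ((\<lambda>(v, w). (Inl v, Inl w)) ` dedges G
          \<union> {(Inr F, Inl v) | F v. F \<in> maxhedges G \<and> v \<in> F})
       (singleton_complex N))"

definition acy :: "'a hedg \<Rightarrow> 'a hedg" where
  "acy G = HEDG (nodes G)
     {(v, w). v \<notin> sc G w \<and> (\<exists>w'\<in>sc G w. (v, w') \<in> dedges G)}
     {F'. \<exists>F\<in>hedges G. F' \<subseteq> (\<Union>v\<in>F. sc G v)}"

definition acag :: "'a hedg \<Rightarrow> ('a + 'a set) hedg" where
  "acag G = HEDG (nodes (acy (aug G))) (dedges (acy (aug G)))
                 (singleton_complex (nodes (acy (aug G))))"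

text \<open>Kinds of edges between consecutive path nodes \<open>v_i\<close> and \<open>v_{i+1}\<close>:
  \<open>Fwd\<close>: \<open>v_i \<rightarrow> v_{i+1}\<close>, \<open>Bwd\<close>: \<open>v_i \<leftarrow> v_{i+1}\<close>, \<open>Bi\<close>: \<open>v_i \<leftrightarrow> v_{i+1}\<close>.\<close>
datatype ekind = Fwd | Bwd | Bi

definition edge_ok :: "'a hedg \<Rightarrow> 'a \<Rightarrow> ekind \<Rightarrow> 'a \<Rightarrow> bool" where
  "edge_ok G v k w = (case k of
      Fwd \<Rightarrow> (v, w) \<in> dedges G
    | Bwd \<Rightarrow> (w, v) \<in> dedges G
    | Bi \<Rightarrow> v \<noteq> w \<and> {v, w} \<in> hedges G)"

text \<open>A path: node list \<open>vs\<close> (at least one node, repetitions allowed) together with the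
  edges \<open>es\<close> used between consecutive nodes.\<close>
definition is_path :: "'a hedg \<Rightarrow> 'a list \<Rightarrow> ekind list \<Rightarrow> bool" where
  "is_path G vs es \<longleftrightarrow> vs \<noteq> [] \<and> length vs = Suc (length es) \<and> set vs \<subseteq> nodes G
     \<and> (\<forall>i < length es. edge_ok G (vs ! i) (es ! i) (vs ! Suc i))"

definition head_at_end :: "ekind \<Rightarrow> bool" where
  "head_at_end k \<longleftrightarrow> k = Fwd \<or> k = Bi"

definition head_at_start :: "ekind \<Rightarrow> bool" where
  "head_at_start k \<longleftrightarrow> k = Bwd \<or> k = Bi"

text \<open>Intermediate node \<open>vs!i\<close> (\<open>0 < i < length es\<close>) is a collider.\<close>
definition collider :: "ekind list \<Rightarrow> nat \<Rightarrow> bool" where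
  "collider es i \<longleftrightarrow> head_at_end (es ! (i - 1)) \<and> head_at_start (es ! i)"

definition d_blocked :: "'a hedg \<Rightarrow> 'a set \<Rightarrow> 'a list \<Rightarrow> ekind list \<Rightarrow> bool" where
  "d_blocked G Z vs es \<longleftrightarrow> hd vs \<in> Z \<or> last vs \<in> Z \<or>
     (\<exists>i. 0 < i \<and> i < length es \<and>
        ((collider es i \<and> vs ! i \<notin> anc_set G Z) \<or>
         (\<not> collider es i \<and> vs ! i \<in> Z)))"

definition sigma_blocked :: "'a hedg \<Rightarrow> 'a set \<Rightarrow> 'a list \<Rightarrow> ekind list \<Rightarrow> bool" where
  "sigma_blocked G Z vs es \<longleftrightarrow> hd vs \<in> Z \<or> last vs \<in> Z \<or>
     (\<exists>i. 0 < i \<and> i < length es \<and>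
        ((collider es i \<and> vs ! i \<notin> anc_set G Z) \<or>
         (\<not> collider es i \<and> vs ! i \<in> Z \<and>
            ((es ! (i - 1) = Bwd \<and> vs ! (i - 1) \<notin> sc G (vs ! i)) \<or>
             (es ! i = Fwd \<and> vs ! Suc i \<notin> sc G (vs ! i))))))"

definition d_sep :: "'a hedg \<Rightarrow> 'a set \<Rightarrow> 'a set \<Rightarrow> 'a set \<Rightarrow> bool" where
  "d_sep G X Y Z \<longleftrightarrow> (\<forall>vs es. is_path G vs es \<and> hd vs \<in> X \<and> last vs \<in> Y
      \<longrightarrow> d_blocked G Z vs es)"

definition sigma_sep :: "'a hedg \<Rightarrow> 'a set \<Rightarrow> 'a set \<Rightarrow> 'a set \<Rightarrow> bool" where
  "sigma_sep G X Y Z \<longleftrightarrow> (\<forall>vs es. is_path G vs es \<and> hd vs \<in> X \<and> last vs \<in> Y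
      \<longrightarrow> sigma_blocked G Z vs es)"

end

theory Submission
  imports Defs
begin

text \<open>Whether a path is d- or \<open>\<sigma>\<close>-open is decided junction by junction, and the junction at
  \<open>v\<close> only depends on the edge by which the path leaves \<open>v\<close> and on two bits recording how it
  arrived: with an arrowhead, and backwards along an edge from another strongly connected
  component. Separation therefore becomes unreachability for an inductive relation of open
  walks, and each equivalence is proved by simulating open walks in both directions. The
  augmentation replaces \<open>v \<leftrightarrow> w\<close> by \<open>v \<leftarrow> e\<^sub>F \<rightarrow> w\<close>, where \<open>e\<^sub>F\<close> is a non-collider outside \<open>Z\<close>. The
  acyclification turns each strongly connected component into a bidirected clique; a
  \<open>\<sigma>\<close>-open walk moves freely inside a component, so d-open walks of \<open>acy G\<close> lift to \<open>G\<close>,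
  while conversely it suffices to track, per component, whether its nodes are reached in
  \<open>acy G\<close> with or without an arrowhead. The remaining graphs are compositions of the two.\<close>

lemma mem_sc_iff: "w \<in> sc G v \<longleftrightarrow> (v, w) \<in> (dedges G)\<^sup>* \<and> (w, v) \<in> (dedges G)\<^sup>*"
  unfolding sc_def anc_def desc_def by auto

lemma sc_refl: "v \<in> sc G v"
  by (simp add: mem_sc_iff)

lemma sc_sym: "w \<in> sc G v \<longleftrightarrow> v \<in> sc G w"
  by (auto simp: mem_sc_iff)

lemma sc_trans: "w \<in> sc G v \<Longrightarrow> u \<in> sc G w \<Longrightarrow> u \<in> sc G v"
  unfolding mem_sc_iff by (meson rtrancl_trans)

lemma sc_eq: "w \<in> sc G v \<Longrightarrow> sc G w = sc G v"
  using sc_trans[of w G v] sc_trans[of v G w] sc_sym[of w G v] by blast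

lemma sc_disjoint: "n \<notin> sc G y \<Longrightarrow> u \<in> sc G y \<Longrightarrow> r \<in> sc G n \<Longrightarrow> u \<noteq> r"
  using sc_eq sc_sym by metis

lemma sc_cong_dedges: "dedges G = dedges G' \<Longrightarrow> sc G = sc G'"
  unfolding sc_def anc_def desc_def by simp

lemma mem_anc_set_iff: "r \<in> anc_set G Z \<longleftrightarrow> (\<exists>z\<in>Z. (r, z) \<in> (dedges G)\<^sup>*)"
  by (simp add: anc_set_def anc_def)

lemma anc_set_cong_dedges: "dedges G = dedges G' \<Longrightarrow> anc_set G = anc_set G'"
  unfolding anc_set_def anc_def by simp

lemma wf_hedg_finite_hedges: "wf_hedg G \<Longrightarrow> finite (hedges G)"
  unfolding wf_hedg_def by (meson finite_Pow_iff rev_finite_subset)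

lemma wf_hedg_subset_hedge: "wf_hedg G \<Longrightarrow> F \<in> hedges G \<Longrightarrow> F' \<subseteq> F \<Longrightarrow> F' \<in> hedges G"
  unfolding wf_hedg_def by blast

lemma wf_hedg_singleton_hedge: "wf_hedg G \<Longrightarrow> v \<in> nodes G \<Longrightarrow> {v} \<in> hedges G"
  unfolding wf_hedg_def by blast

lemma wf_hedg_hedge_subset: "wf_hedg G \<Longrightarrow> F \<in> hedges G \<Longrightarrow> F \<subseteq> nodes G"
  unfolding wf_hedg_def by auto

lemma wf_hedg_dedges: "wf_hedg G \<Longrightarrow> (v, w) \<in> dedges G \<Longrightarrow> v \<in> nodes G \<and> w \<in> nodes G"
  unfolding wf_hedg_def by auto

lemma sc_subset_nodes:
  assumes wf: "wf_hedg G" and v: "v \<in> nodes G"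
  shows "sc G v \<subseteq> nodes G"
proof
  fix w assume "w \<in> sc G v"
  then have "(v, w) \<in> (dedges G)\<^sup>*" by (simp add: mem_sc_iff)
  then show "w \<in> nodes G"
  proof (induction rule: rtrancl_induct)
    case (step u w)
    then show ?case using wf_hedg_dedges[OF wf] by blast
  qed (fact v)
qed

lemma ex_maxhedge_superset:
  assumes "finite (hedges G)" "S \<in> hedges G"
  shows "\<exists>F\<in>maxhedges G. S \<subseteq> F"
proof -
  obtain m where "m \<in> hedges G" "S \<subseteq> m" "\<forall>b\<in>hedges G. m \<subseteq> b \<longrightarrow> m = b"
    using finite_has_maximal2[OF assms] by blast
  then show ?thesis unfolding maxhedges_def by auto
qed

subsection \<open>Open walks\<close>

text \<open>A walk reaches its current node \<open>v\<close> with an arrival \<open>(h, b)\<close> (\<open>None\<close> at the start): \<open>h\<close>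
  says that the last edge has an arrowhead at \<open>v\<close>, and \<open>b\<close> that it is an edge \<open>u \<rightarrow> v\<close>
  traversed backwards with \<open>u \<notin> sc G v\<close>. The flag \<open>sig\<close> selects \<open>\<sigma>\<close>-blocking (\<open>True\<close>) or
  d-blocking (\<open>False\<close>).\<close>

type_synonym arrival = "bool \<times> bool"

abbreviation arrival_along :: "'a hedg \<Rightarrow> 'a \<Rightarrow> ekind \<Rightarrow> 'a \<Rightarrow> arrival" where
  "arrival_along G u k v \<equiv> (head_at_end k, k = Bwd \<and> u \<notin> sc G v)"

definition open_junction :: "'a hedg \<Rightarrow> bool \<Rightarrow> 'a set \<Rightarrow> 'a \<Rightarrow> arrival \<Rightarrow> ekind \<Rightarrow> 'a \<Rightarrow> bool" where
  "open_junction G sig Z v a k w \<longleftrightarrow> (if fst a \<and> head_at_start k then v \<in> anc_set G Z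
      else v \<notin> Z \<or> (sig \<and> \<not> snd a \<and> \<not> (k = Fwd \<and> w \<notin> sc G v)))"

definition can_leave :: "'a hedg \<Rightarrow> bool \<Rightarrow> 'a set \<Rightarrow> 'a \<Rightarrow> arrival option \<Rightarrow> ekind \<Rightarrow> 'a \<Rightarrow> bool" where
  "can_leave G sig Z v s k w \<longleftrightarrow> (case s of None \<Rightarrow> True | Some a \<Rightarrow> open_junction G sig Z v a k w)"

inductive open_walk :: "'a hedg \<Rightarrow> bool \<Rightarrow> 'a set \<Rightarrow> 'a \<Rightarrow> 'a \<Rightarrow> arrival option \<Rightarrow> bool"
  for G sig Z where
  start: "x \<in> nodes G \<Longrightarrow> open_walk G sig Z x x None"
| step: "open_walk G sig Z x y s \<Longrightarrow> edge_ok G y k w \<Longrightarrow> w \<in> nodes G \<Longrightarrow> can_leave G sig Z y s k w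
     \<Longrightarrow> open_walk G sig Z x w (Some (arrival_along G y k w))"

definition junctions_open :: "'a hedg \<Rightarrow> bool \<Rightarrow> 'a set \<Rightarrow> 'a list \<Rightarrow> ekind list \<Rightarrow> bool" where
  "junctions_open G sig Z vs es \<longleftrightarrow> (\<forall>i. 0 < i \<and> i < length es \<longrightarrow>
     open_junction G sig Z (vs ! i) (arrival_along G (vs ! (i - 1)) (es ! (i - 1)) (vs ! i)) (es ! i) (vs ! Suc i))"

lemma sigma_blocked_iff:
  "sigma_blocked G Z vs es \<longleftrightarrow> hd vs \<in> Z \<or> last vs \<in> Z \<or> \<not> junctions_open G True Z vs es"
  unfolding sigma_blocked_def junctions_open_def open_junction_def collider_def by auto

lemma d_blocked_iff:
  "d_blocked G Z vs es \<longleftrightarrow> hd vs \<in> Z \<or> last vs \<in> Z \<or> \<not> junctions_open G False Z vs es"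
  unfolding d_blocked_def junctions_open_def open_junction_def collider_def by auto

definition walk_sep :: "'a hedg \<Rightarrow> bool \<Rightarrow> 'a set \<Rightarrow> 'a set \<Rightarrow> 'a set \<Rightarrow> bool" where
  "walk_sep G sig X Y Z \<longleftrightarrow> (\<forall>x\<in>X - Z. \<forall>y\<in>Y - Z. \<forall>s. \<not> open_walk G sig Z x y s)"

lemma open_walk_nodes: "open_walk G sig Z x y s \<Longrightarrow> x \<in> nodes G \<and> y \<in> nodes G"
  by (induction rule: open_walk.induct) auto

lemma open_walk_arrival: "open_walk G sig Z x y s \<Longrightarrow> s = Some (h, b) \<Longrightarrow> b \<Longrightarrow> \<not> h"
  by (induction rule: open_walk.induct) (auto simp: head_at_end_def)

lemma can_leave_None [simp]: "can_leave G sig Z v None k w"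
  by (simp add: can_leave_def)

lemma can_leave_Some [simp]: "can_leave G sig Z v (Some a) k w \<longleftrightarrow> open_junction G sig Z v a k w"
  by (simp add: can_leave_def)

lemma open_walk_of_path:
  assumes path: "is_path G vs es" and "junctions_open G sig Z vs es"
  shows "n \<le> length es \<Longrightarrow> open_walk G sig Z (hd vs) (vs ! n)
     (if n = 0 then None else Some (arrival_along G (vs ! (n - 1)) (es ! (n - 1)) (vs ! n)))"
proof (induction n)
  case 0
  from path have "vs \<noteq> []" "set vs \<subseteq> nodes G" unfolding is_path_def by auto
  then have "vs ! 0 \<in> nodes G" by (auto intro: nth_mem)
  then show ?case using \<open>vs \<noteq> []\<close> by (simp add: hd_conv_nth open_walk.start)
next
  case (Suc n)
  from path Suc.prems have e: "edge_ok G (vs ! n) (es ! n) (vs ! Suc n)"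
    and "vs ! Suc n \<in> nodes G" unfolding is_path_def by auto
  moreover have "n \<noteq> 0 \<Longrightarrow>
      open_junction G sig Z (vs ! n) (arrival_along G (vs ! (n - 1)) (es ! (n - 1)) (vs ! n)) (es ! n) (vs ! Suc n)"
    using \<open>junctions_open G sig Z vs es\<close> Suc.prems unfolding junctions_open_def by simp
  then have "can_leave G sig Z (vs ! n)
      (if n = 0 then None else Some (arrival_along G (vs ! (n - 1)) (es ! (n - 1)) (vs ! n))) (es ! n) (vs ! Suc n)"
    by simp
  ultimately show ?case using open_walk.step[OF Suc.IH] Suc.prems by simp
qed

lemma is_path_snoc:
  assumes "is_path G vs es" "last vs = y" "edge_ok G y k w" "w \<in> nodes G"
  shows "is_path G (vs @ [w]) (es @ [k])"
  unfolding is_path_def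
proof (intro conjI allI impI)
  fix i assume "i < length (es @ [k])"
  then consider "i < length es" | "i = length es" by fastforce
  then show "edge_ok G ((vs @ [w]) ! i) ((es @ [k]) ! i) ((vs @ [w]) ! Suc i)"
    by cases (use assms in \<open>auto simp: is_path_def nth_append last_conv_nth\<close>)
qed (use assms in \<open>auto simp: is_path_def\<close>)

lemma junctions_open_snoc:
  assumes "junctions_open G sig Z vs es" "length vs = Suc (length es)" "last vs = y"
    and "can_leave G sig Z y (if es = [] then None else Some (arrival_along G (vs ! (length es - 1)) (last es) y)) k w"
  shows "junctions_open G sig Z (vs @ [w]) (es @ [k])"
  unfolding junctions_open_def
proof (intro allI impI)
  fix i assume i: "0 < i \<and> i < length (es @ [k])"
  then consider "i < length es" | "i = length es" by fastforce
  then show "open_junction G sig Z ((vs @ [w]) ! i)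
     (arrival_along G ((vs @ [w]) ! (i - 1)) ((es @ [k]) ! (i - 1)) ((vs @ [w]) ! i)) ((es @ [k]) ! i) ((vs @ [w]) ! Suc i)"
  proof cases
    case 1
    moreover have "i - 1 < length es" using 1 by simp
    ultimately show ?thesis using assms(1,2) i by (simp add: junctions_open_def nth_append)
  next
    case 2
    then have "es \<noteq> []" "vs \<noteq> []" using i assms(2) by auto
    moreover have "last es = es ! (length es - 1)" "vs ! length es = y"
      "length es - 1 < length es" "length es - 1 < length vs"
      using \<open>es \<noteq> []\<close> \<open>vs \<noteq> []\<close> assms(2,3) by (auto simp: last_conv_nth)
    ultimately show ?thesis using assms(2,4) 2 by (simp add: nth_append)
  qed
qed

lemma path_of_open_walk:
  "open_walk G sig Z x y s \<Longrightarrow> \<exists>vs es. is_path G vs es \<and> hd vs = x \<and> last vs = y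
    \<and> junctions_open G sig Z vs es
    \<and> s = (if es = [] then None else Some (arrival_along G (vs ! (length es - 1)) (last es) y))"
proof (induction rule: open_walk.induct)
  case (start x)
  show ?case
    by (intro exI[of _ "[x]"] exI[of _ "[]"]) (simp add: is_path_def junctions_open_def start)
next
  case (step x y s k w)
  then obtain vs es where p: "is_path G vs es" "hd vs = x" "last vs = y"
    and m: "junctions_open G sig Z vs es"
    and s: "s = (if es = [] then None else Some (arrival_along G (vs ! (length es - 1)) (last es) y))"
    by blast
  from p have l: "vs \<noteq> []" "length vs = Suc (length es)" unfolding is_path_def by auto
  have "vs ! length es = y" using p(3) l by (simp add: last_conv_nth)
  then show ?case
    using is_path_snoc[OF p(1,3) step.hyps(2,3)] junctions_open_snoc[OF m l(2) p(3)] step.hyps(4) s p(2) l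
    by (intro exI[of _ "vs @ [w]"] exI[of _ "es @ [k]"]) (simp add: nth_append)
qed

lemma all_paths_blocked_iff_walk_sep:
  "(\<forall>vs es. is_path G vs es \<and> hd vs \<in> X \<and> last vs \<in> Y \<longrightarrow>
      hd vs \<in> Z \<or> last vs \<in> Z \<or> \<not> junctions_open G sig Z vs es)
     \<longleftrightarrow> walk_sep G sig X Y Z"
proof
  assume "\<forall>vs es. is_path G vs es \<and> hd vs \<in> X \<and> last vs \<in> Y \<longrightarrow>
      hd vs \<in> Z \<or> last vs \<in> Z \<or> \<not> junctions_open G sig Z vs es"
  then show "walk_sep G sig X Y Z"
    unfolding walk_sep_def by (metis DiffE path_of_open_walk)
next
  assume sep: "walk_sep G sig X Y Z"
  show "\<forall>vs es. is_path G vs es \<and> hd vs \<in> X \<and> last vs \<in> Y \<longrightarrow>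
      hd vs \<in> Z \<or> last vs \<in> Z \<or> \<not> junctions_open G sig Z vs es"
  proof (intro allI impI)
    fix vs es assume a: "is_path G vs es \<and> hd vs \<in> X \<and> last vs \<in> Y"
    then have "vs ! length es = last vs" unfolding is_path_def by (simp add: last_conv_nth)
    then have "junctions_open G sig Z vs es \<Longrightarrow> \<exists>s. open_walk G sig Z (hd vs) (last vs) s"
      using open_walk_of_path[of G vs es sig Z "length es"] a by auto
    then show "hd vs \<in> Z \<or> last vs \<in> Z \<or> \<not> junctions_open G sig Z vs es"
      using sep a unfolding walk_sep_def by blast
  qed
qed

lemma sigma_sep_iff_walk_sep: "sigma_sep G X Y Z \<longleftrightarrow> walk_sep G True X Y Z"
  unfolding sigma_sep_def sigma_blocked_iff all_paths_blocked_iff_walk_sep ..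

lemma d_sep_iff_walk_sep: "d_sep G X Y Z \<longleftrightarrow> walk_sep G False X Y Z"
  unfolding d_sep_def d_blocked_iff all_paths_blocked_iff_walk_sep ..

subsection \<open>Augmentation\<close>

lemma aug_nodes: "nodes (aug G) = Inl ` nodes G \<union> Inr ` maxhedges G"
  unfolding aug_def Let_def by simp

lemma aug_dedges: "dedges (aug G) = (\<lambda>(v, w). (Inl v, Inl w)) ` dedges G
    \<union> {(Inr F, Inl v) | F v. F \<in> maxhedges G \<and> v \<in> F}"
  unfolding aug_def Let_def by simp

lemma aug_hedges: "hedges (aug G) = singleton_complex (nodes (aug G))"
  unfolding aug_def Let_def by simp

lemma Inl_in_aug_nodes [simp]: "Inl v \<in> nodes (aug G) \<longleftrightarrow> v \<in> nodes G"
  by (auto simp: aug_nodes)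

lemma Inr_in_aug_nodes [simp]: "Inr F \<in> nodes (aug G) \<longleftrightarrow> F \<in> maxhedges G"
  by (auto simp: aug_nodes)

lemma aug_dedge_Inl_Inl [simp]: "(Inl v, Inl w) \<in> dedges (aug G) \<longleftrightarrow> (v, w) \<in> dedges G"
  unfolding aug_dedges by auto

lemma aug_dedge_Inr_Inl [simp]: "(Inr F, Inl w) \<in> dedges (aug G) \<longleftrightarrow> F \<in> maxhedges G \<and> w \<in> F"
  unfolding aug_dedges by auto

lemma aug_no_dedge_into_Inr [simp]: "(a, Inr F) \<notin> dedges (aug G)"
  unfolding aug_dedges by auto

lemma Inl_in_image_Inl_iff [simp]: "Inl y \<in> Inl ` A \<longleftrightarrow> y \<in> A"
  by auto

lemma Inr_notin_image_Inl [simp]: "Inr F \<notin> Inl ` A"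
  by auto

lemma aug_no_bidirected_edge: "\<not> edge_ok (aug G) a Bi b"
  unfolding edge_ok_def aug_hedges singleton_complex_def by auto

lemma wf_hedg_aug: "wf_hedg G \<Longrightarrow> wf_hedg (aug G)"
proof -
  assume wf: "wf_hedg G"
  then have "finite (maxhedges G)"
    using wf_hedg_finite_hedges[OF wf] unfolding maxhedges_def by simp
  with wf have "finite (nodes (aug G))"
    unfolding aug_nodes wf_hedg_def by simp
  moreover have "F \<subseteq> nodes G" if "F \<in> maxhedges G" for F
    using wf that unfolding maxhedges_def wf_hedg_def by auto
  then have "dedges (aug G) \<subseteq> nodes (aug G) \<times> nodes (aug G)"
    using wf unfolding aug_dedges aug_nodes wf_hedg_def by fastforce
  ultimately show ?thesis
    unfolding wf_hedg_def aug_hedges singleton_complex_def by (auto; blast)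
qed

lemma aug_rtrancl_from_Inl:
  "(Inl v, b) \<in> (dedges (aug G))\<^sup>* \<Longrightarrow> \<exists>w. b = Inl w \<and> (v, w) \<in> (dedges G)\<^sup>*"
proof (induction rule: rtrancl_induct)
  case (step y z)
  then obtain w where "y = Inl w" "(v, w) \<in> (dedges G)\<^sup>*" by auto
  moreover obtain u where "z = Inl u" using step.hyps(2) by (cases z) auto
  ultimately show ?case using step.hyps(2) by auto
qed auto

lemma aug_rtrancl_to_Inr: "(a, Inr F) \<in> (dedges (aug G))\<^sup>* \<Longrightarrow> a = Inr F"
  by (induction rule: converse_rtrancl_induct) auto

lemma aug_rtrancl_Inl_iff: "(Inl v, Inl w) \<in> (dedges (aug G))\<^sup>* \<longleftrightarrow> (v, w) \<in> (dedges G)\<^sup>*"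
proof
  assume "(v, w) \<in> (dedges G)\<^sup>*"
  then show "(Inl v, Inl w) \<in> (dedges (aug G))\<^sup>*"
    by (induction rule: rtrancl_induct) (auto intro: rtrancl_into_rtrancl)
qed (use aug_rtrancl_from_Inl in fastforce)

lemma sc_aug_Inl: "sc (aug G) (Inl v) = Inl ` sc G v"
proof -
  have "b \<in> sc (aug G) (Inl v) \<longleftrightarrow> b \<in> Inl ` sc G v" for b
  proof (cases b)
    case (Inr F)
    then show ?thesis using aug_rtrancl_to_Inr[where a = "Inl v"] by (auto simp: mem_sc_iff)
  qed (auto simp: mem_sc_iff aug_rtrancl_Inl_iff)
  then show ?thesis by blast
qed

lemma sc_aug_Inr: "sc (aug G) (Inr F) = {Inr F}"
  using sc_refl[of "Inr F" "aug G"] aug_rtrancl_to_Inr by (fastforce simp: mem_sc_iff)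

lemma Inl_in_anc_set_aug_iff: "Inl u \<in> anc_set (aug G) (Inl ` Z) \<longleftrightarrow> u \<in> anc_set G Z"
  by (auto simp: mem_anc_set_iff aug_rtrancl_Inl_iff)

lemma open_junction_aug:
  "open_junction (aug G) sig (Inl ` Z) (Inl y) a k (Inl w) \<longleftrightarrow> open_junction G sig Z y a k w"
  unfolding open_junction_def by (auto simp: Inl_in_anc_set_aug_iff sc_aug_Inl)

lemma can_leave_aug:
  "can_leave (aug G) sig (Inl ` Z) (Inl y) s k (Inl w) \<longleftrightarrow> can_leave G sig Z y s k w"
  by (cases s) (simp_all add: open_junction_aug)

text \<open>A bidirected edge \<open>y \<leftrightarrow> w\<close> of \<open>G\<close> becomes \<open>y \<leftarrow> e\<^sub>F \<rightarrow> w\<close>: the junction at \<open>y\<close> is the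
  same, and \<open>e\<^sub>F\<close> is a non-collider outside \<open>Inl ` Z\<close>.\<close>

lemma can_leave_aug_to_Inr:
  "can_leave (aug G) sig (Inl ` Z) (Inl y) s Bwd (Inr F) \<longleftrightarrow> can_leave G sig Z y s Bi w"
  unfolding can_leave_def open_junction_def head_at_start_def
  by (cases s) (auto simp: Inl_in_anc_set_aug_iff)

lemma open_walk_aug:
  assumes fin: "finite (hedges G)"
  shows "open_walk G sig Z x y s \<Longrightarrow> open_walk (aug G) sig (Inl ` Z) (Inl x) (Inl y) s"
proof (induction rule: open_walk.induct)
  case (start x)
  then show ?case by (simp add: open_walk.start)
next
  case (step x y s k w)
  have leave: "can_leave (aug G) sig (Inl ` Z) (Inl y) s k (Inl w)"
    using step.hyps(4) by (simp add: can_leave_aug)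
  show ?case
  proof (cases k)
    case Bi
    then have "y \<noteq> w" "{y, w} \<in> hedges G" using step.hyps(2) by (auto simp: edge_ok_def)
    then obtain F where F: "F \<in> maxhedges G" "{y, w} \<subseteq> F"
      using ex_maxhedge_superset[OF fin] by blast
    have "can_leave (aug G) sig (Inl ` Z) (Inl y) s Bwd (Inr F)"
      using step.hyps(4) Bi can_leave_aug_to_Inr by metis
    then have "open_walk (aug G) sig (Inl ` Z) (Inl x) (Inr F) (Some (False, True))"
      using open_walk.step[OF step.IH, of Bwd "Inr F"] F
      by (simp add: edge_ok_def head_at_end_def sc_aug_Inr)
    moreover have "can_leave (aug G) sig (Inl ` Z) (Inr F) (Some (False, True)) Fwd (Inl w)"
      by (simp add: open_junction_def)
    ultimately show ?thesis
      using open_walk.step[of "aug G" sig "Inl ` Z" "Inl x" "Inr F" _ Fwd "Inl w"] F Bi step.hyps(3)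
      by (simp add: edge_ok_def head_at_end_def)
  qed (use open_walk.step[OF step.IH _ _ leave] step.hyps(2,3) in \<open>simp_all add: edge_ok_def sc_aug_Inl\<close>)
qed

definition at_least_as_open :: "'a hedg \<Rightarrow> bool \<Rightarrow> 'a set \<Rightarrow> 'a \<Rightarrow> arrival option \<Rightarrow> arrival option \<Rightarrow> bool" where
  "at_least_as_open G sig Z y s' s \<longleftrightarrow> (\<forall>k w. can_leave G sig Z y s k w \<longrightarrow> can_leave G sig Z y s' k w)"

lemma at_least_as_open_refl: "at_least_as_open G sig Z y s s"
  unfolding at_least_as_open_def by auto

lemma can_leave_Bi_indep: "can_leave G sig Z y s Bi w \<longleftrightarrow> can_leave G sig Z y s Bi w'"
  unfolding can_leave_def open_junction_def by (cases s) auto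

lemma at_least_as_open_head:
  assumes valid: "\<forall>h b. s = Some (h, b) \<longrightarrow> b \<longrightarrow> \<not> h" and leave: "can_leave G sig Z y s Bi y"
  shows "at_least_as_open G sig Z y s (Some (True, False))"
  unfolding at_least_as_open_def
proof (intro allI impI)
  fix k w assume "can_leave G sig Z y (Some (True, False)) k w"
  then have h: "open_junction G sig Z y (True, False) k w" by simp
  show "can_leave G sig Z y s k w"
  proof (cases s)
    case (Some a)
    obtain h' b where a: "a = (h', b)" by fastforce
    then have "open_junction G sig Z y (h', b) Bi y" "b \<longrightarrow> \<not> h'" using leave valid Some by auto
    then show ?thesis using h Some a
      by (cases k) (simp_all add: open_junction_def head_at_start_def split: if_splits)
  qed simp
qed

text \<open>A step \<open>y \<leftarrow> e\<^sub>F \<rightarrow> w\<close> of the augmented graph becomes \<open>y \<leftrightarrow> w\<close> in \<open>G\<close>, or no step at all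
  when \<open>w = y\<close>.\<close>

lemma open_walk_across_hyperedge:
  assumes wf: "wf_hedg G" and F: "F \<in> hedges G" "y \<in> F" "w \<in> F" "w \<in> nodes G"
    and walk: "open_walk G sig Z x y s" and leave: "can_leave G sig Z y s Bi y"
  shows "\<exists>s'. open_walk G sig Z x w s' \<and> at_least_as_open G sig Z w s' (Some (True, False))"
proof (cases "w = y")
  case True
  have "at_least_as_open G sig Z y s (Some (True, False))"
    by (rule at_least_as_open_head[OF _ leave]) (use open_walk_arrival[OF walk] in blast)
  then show ?thesis using True walk by blast
next
  case False
  have "{y, w} \<in> hedges G" using F by (auto intro: wf_hedg_subset_hedge[OF wf, of F])
  then have "edge_ok G y Bi w" using False by (simp add: edge_ok_def)
  moreover have "can_leave G sig Z y s Bi w" using leave can_leave_Bi_indep by metis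
  ultimately have "open_walk G sig Z x w (Some (arrival_along G y Bi w))"
    using open_walk.step[OF walk _ F(4)] by blast
  then show ?thesis by (auto simp: head_at_end_def intro: at_least_as_open_refl)
qed

lemma open_walk_of_open_walk_aug:
  assumes wf: "wf_hedg G"
  shows "open_walk (aug G) sig (Inl ` Z) a b s \<Longrightarrow> a = Inl x \<Longrightarrow>
    (case b of
      Inl y \<Rightarrow> \<exists>s'. open_walk G sig Z x y s' \<and> at_least_as_open G sig Z y s' s
    | Inr F \<Rightarrow> F \<in> maxhedges G \<and> (\<exists>y s'. y \<in> F \<and> open_walk G sig Z x y s' \<and> can_leave G sig Z y s' Bi y))"
proof (induction rule: open_walk.induct)
  case (start a)
  then show ?case by (auto intro!: open_walk.start at_least_as_open_refl)
next
  case (step a b s k c)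
  note IH = step.IH[OF step.prems]
  have "k \<noteq> Bi" using step.hyps(2) aug_no_bidirected_edge by metis
  show ?case
  proof (cases b)
    case (Inl y)
    then obtain s' where walk: "open_walk G sig Z x y s'" and more: "at_least_as_open G sig Z y s' s"
      using IH by auto
    show ?thesis
    proof (cases c)
      case (Inl w)
      have "edge_ok G y k w"
        using step.hyps(2) \<open>k \<noteq> Bi\<close> \<open>b = Inl y\<close> Inl by (cases k) (auto simp: edge_ok_def)
      moreover have "can_leave G sig Z y s' k w"
        using step.hyps(4) more \<open>b = Inl y\<close> Inl by (auto simp: at_least_as_open_def can_leave_aug)
      ultimately show ?thesis
        using open_walk.step[OF walk] step.hyps(3) Inl \<open>b = Inl y\<close> at_least_as_open_refl
        by (fastforce simp: sc_aug_Inl)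
    next
      case (Inr F)
      then have "k = Bwd" "F \<in> maxhedges G" "y \<in> F"
        using step.hyps(2) \<open>k \<noteq> Bi\<close> \<open>b = Inl y\<close> by (cases k; simp add: edge_ok_def)+
      have "can_leave G sig Z y s Bi y"
        using step.hyps(4) \<open>b = Inl y\<close> Inr \<open>k = Bwd\<close> can_leave_aug_to_Inr by metis
      then have "can_leave G sig Z y s' Bi y"
        using more unfolding at_least_as_open_def by blast
      then show ?thesis using Inr walk \<open>F \<in> maxhedges G\<close> \<open>y \<in> F\<close> by auto
    qed
  next
    case (Inr F)
    then obtain y s' where F: "F \<in> maxhedges G" "y \<in> F"
      and walk: "open_walk G sig Z x y s'" and leave: "can_leave G sig Z y s' Bi y"
      using IH by auto
    obtain w where c: "c = Inl w" "k = Fwd" "w \<in> F"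
      using step.hyps(2) \<open>k \<noteq> Bi\<close> Inr by (cases c; cases k) (auto simp: edge_ok_def)
    have "F \<in> hedges G" "w \<in> nodes G" using F(1) step.hyps(3) c(1) by (auto simp: maxhedges_def)
    then show ?thesis
      using open_walk_across_hyperedge[OF wf _ F(2) c(3) _ walk leave] c by (simp add: head_at_end_def)
  qed
qed

lemma walk_sep_aug_iff:
  assumes wf: "wf_hedg G"
  shows "walk_sep (aug G) sig (Inl ` X) (Inl ` Y) (Inl ` Z) \<longleftrightarrow> walk_sep G sig X Y Z"
proof
  assume "walk_sep (aug G) sig (Inl ` X) (Inl ` Y) (Inl ` Z)"
  then show "walk_sep G sig X Y Z"
    using open_walk_aug[OF wf_hedg_finite_hedges[OF wf]] unfolding walk_sep_def by blast
next
  assume sep: "walk_sep G sig X Y Z"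
  show "walk_sep (aug G) sig (Inl ` X) (Inl ` Y) (Inl ` Z)"
    unfolding walk_sep_def
  proof (intro ballI allI notI)
    fix a b s assume "a \<in> Inl ` X - Inl ` Z" "b \<in> Inl ` Y - Inl ` Z"
      and walk: "open_walk (aug G) sig (Inl ` Z) a b s"
    then obtain x y where "a = Inl x" "b = Inl y" "x \<in> X - Z" "y \<in> Y - Z" by auto
    moreover from this obtain s' where "open_walk G sig Z x y s'"
      using open_walk_of_open_walk_aug[OF wf walk] by auto
    ultimately show False using sep unfolding walk_sep_def by blast
  qed
qed

subsection \<open>Acyclification\<close>

lemma acy_nodes [simp]: "nodes (acy G) = nodes G"
  unfolding acy_def by simp

lemma acy_dedge_iff: "(v, w) \<in> dedges (acy G) \<longleftrightarrow> v \<notin> sc G w \<and> (\<exists>w'\<in>sc G w. (v, w') \<in> dedges G)"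
  unfolding acy_def by simp

lemma acy_hedge_iff: "F' \<in> hedges (acy G) \<longleftrightarrow> (\<exists>F\<in>hedges G. F' \<subseteq> (\<Union>v\<in>F. sc G v))"
  unfolding acy_def by simp

lemma wf_hedg_acy:
  assumes wf: "wf_hedg G"
  shows "wf_hedg (acy G)"
proof -
  have "dedges (acy G) \<subseteq> nodes G \<times> nodes G"
  proof clarify
    fix v w assume "(v, w) \<in> dedges (acy G)"
    then obtain w' where "w' \<in> sc G w" "(v, w') \<in> dedges G" by (auto simp: acy_dedge_iff)
    moreover from this have "w \<in> sc G w'" by (simp add: sc_sym)
    ultimately show "v \<in> nodes G \<and> w \<in> nodes G"
      using wf_hedg_dedges[OF wf, of v w'] sc_subset_nodes[OF wf, of w'] by blast
  qed
  moreover have "F' \<subseteq> nodes G" if F': "F' \<in> hedges (acy G)" for F'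
  proof -
    obtain F where "F \<in> hedges G" "F' \<subseteq> (\<Union>v\<in>F. sc G v)"
      using F' by (auto simp: acy_hedge_iff)
    then show ?thesis using wf_hedg_hedge_subset[OF wf] sc_subset_nodes[OF wf] by blast
  qed
  moreover have "{v} \<in> hedges (acy G)" if "v \<in> nodes G" for v
    using wf_hedg_singleton_hedge[OF wf that] sc_refl[of v G] by (auto simp: acy_hedge_iff)
  moreover have "F' \<in> hedges (acy G)" if "F \<in> hedges (acy G)" "F' \<subseteq> F" for F F'
    using that by (auto simp: acy_hedge_iff)
  ultimately show ?thesis using wf unfolding wf_hedg_def by auto
qed

lemma rtrancl_acy_imp_rtrancl: "(u, z) \<in> (dedges (acy G))\<^sup>* \<Longrightarrow> (u, z) \<in> (dedges G)\<^sup>*"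
proof (induction rule: rtrancl_induct)
  case (step y z)
  then obtain w' where "w' \<in> sc G z" "(y, w') \<in> dedges G"
    unfolding acy_dedge_iff by blast
  then have "(w', z) \<in> (dedges G)\<^sup>*" "(y, w') \<in> dedges G"
    unfolding mem_sc_iff by auto
  then have "(y, z) \<in> (dedges G)\<^sup>*" by (rule converse_rtrancl_into_rtrancl[rotated])
  with step.IH show ?case by (rule rtrancl_trans)
qed simp

lemma anc_set_acy_subset: "anc_set (acy G) Z \<subseteq> anc_set G Z"
  using rtrancl_acy_imp_rtrancl unfolding mem_anc_set_iff subset_iff by metis

lemma ex_sc_rtrancl_acy: "(u, z) \<in> (dedges G)\<^sup>* \<Longrightarrow> \<exists>r\<in>sc G u. (r, z) \<in> (dedges (acy G))\<^sup>*"
proof (induction rule: converse_rtrancl_induct)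
  case base
  show ?case using sc_refl[of z G] by blast
next
  case (step u u')
  then obtain r' where r': "r' \<in> sc G u'" "(r', z) \<in> (dedges (acy G))\<^sup>*" by blast
  show ?case
  proof (cases "u \<in> sc G u'")
    case True
    then have "r' \<in> sc G u" using r'(1) by (simp add: sc_eq)
    then show ?thesis using r'(2) by blast
  next
    case False
    have "u' \<in> sc G r'" using r'(1) by (rule sc_sym[THEN iffD1])
    moreover have "u \<notin> sc G r'" using False by (simp add: sc_eq[OF r'(1)])
    ultimately have "(u, r') \<in> dedges (acy G)" using step.hyps(1) by (auto simp: acy_dedge_iff)
    then have "(u, z) \<in> (dedges (acy G))\<^sup>*" using r'(2) by (rule converse_rtrancl_into_rtrancl)
    then show ?thesis using sc_refl[of u G] by blast
  qed
qed

lemma ex_sc_anc_set_acy: "y \<in> anc_set G Z \<Longrightarrow> \<exists>r\<in>sc G y. r \<in> anc_set (acy G) Z"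
  unfolding mem_anc_set_iff using ex_sc_rtrancl_acy by metis

lemma acy_dedge_into_sc:
  "(n, y) \<in> dedges G \<Longrightarrow> n \<notin> sc G y \<Longrightarrow> e \<in> sc G y \<Longrightarrow> (n, e) \<in> dedges (acy G)"
  unfolding acy_dedge_iff using sc_eq[of e G y] sc_sym[of e G y] by auto

lemma acy_dedge_from_sc:
  "(y, n) \<in> dedges G \<Longrightarrow> n \<notin> sc G y \<Longrightarrow> r \<in> sc G n \<Longrightarrow> (y, r) \<in> dedges (acy G)"
  unfolding acy_dedge_iff using sc_eq[of r G n] sc_sym[of r G n] sc_sym[of n G y] by auto

lemma acy_hedge_of_sc:
  "F \<in> hedges G \<Longrightarrow> u \<in> F \<Longrightarrow> v \<in> F \<Longrightarrow> e \<in> sc G u \<Longrightarrow> r \<in> sc G v \<Longrightarrow> {e, r} \<in> hedges (acy G)"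
  unfolding acy_hedge_iff by (rule bexI[of _ F]) auto

subsection \<open>From d-open walks in the acyclification to \<open>\<sigma>\<close>-open walks\<close>

text \<open>Relates the arrival of a \<open>\<sigma>\<close>-open walk of \<open>G\<close> to that of the d-open walk of \<open>acy G\<close>
  with the same endpoints that it simulates.\<close>

definition tracks :: "arrival option \<Rightarrow> arrival option \<Rightarrow> bool" where
  "tracks sG sA \<longleftrightarrow> (sA = None \<longleftrightarrow> sG = None) \<and>
    (\<forall>h b h' b'. sA = Some (h, b) \<longrightarrow> sG = Some (h', b') \<longrightarrow> (h' \<longrightarrow> h) \<and> (h \<and> \<not> h' \<longrightarrow> \<not> b'))"

lemma can_leave_of_can_leave_acy:
  assumes tracks: "tracks sG sA" and leave: "can_leave (acy G) False Z y sA k w"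
    and valid: "\<forall>h b. sG = Some (h, b) \<longrightarrow> b \<longrightarrow> \<not> h"
    and k_head: "k' \<noteq> Fwd \<longrightarrow> k \<noteq> Fwd" and k_Fwd: "k' = Fwd \<longrightarrow> k = Fwd \<or> p \<in> sc G y"
  shows "can_leave G True Z y sG k' p"
proof (cases sA)
  case None
  then show ?thesis using tracks by (simp add: tracks_def)
next
  case (Some a)
  obtain h b where a: "a = (h, b)" by fastforce
  obtain h' b' where sG: "sG = Some (h', b')" using tracks Some a by (cases sG) (auto simp: tracks_def)
  have arrivals: "h' \<longrightarrow> h" "h \<and> \<not> h' \<longrightarrow> \<not> b'"
    using tracks Some a sG by (auto simp: tracks_def)
  have b': "b' \<longrightarrow> \<not> h'" using valid sG by simp
  have "open_junction (acy G) False Z y (h, b) k w" using leave Some a by simp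
  then have acy_anc: "h \<and> head_at_start k \<Longrightarrow> y \<in> anc_set G Z" and acy_Z: "y \<in> Z \<Longrightarrow> h \<and> head_at_start k"
    using anc_set_acy_subset[of G Z] unfolding open_junction_def by (auto split: if_splits)
  have not_head_iff: "\<not> head_at_start k \<longleftrightarrow> k = Fwd" for k
    by (cases k) (simp_all add: head_at_start_def)
  show ?thesis
  proof (cases "h' \<and> head_at_start k'")
    case True
    then have "h \<and> head_at_start k" using arrivals(1) k_head not_head_iff by blast
    then show ?thesis using True acy_anc sG by (simp add: open_junction_def)
  next
    case False
    have "\<not> b' \<and> \<not> (k' = Fwd \<and> p \<notin> sc G y)" if "y \<in> Z"
      using acy_Z[OF that] arrivals b' k_Fwd not_head_iff by blast
    then show ?thesis using False sG by (auto simp: open_junction_def)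
  qed
qed

lemma open_walk_Fwd_within_sc:
  assumes wf: "wf_hedg G" and walk: "open_walk G True Z x m s0"
    and leave: "\<forall>p\<in>sc G m. can_leave G True Z m s0 Fwd p"
  shows "(m, w) \<in> (dedges G)\<^sup>* \<Longrightarrow> (w, m) \<in> (dedges G)\<^sup>* \<Longrightarrow>
    \<exists>s. open_walk G True Z x w s \<and> ((w = m \<and> s = s0) \<or> s = Some (True, False))"
proof (induction rule: rtrancl_induct)
  case base
  then show ?case using walk by blast
next
  case (step p q)
  have "(p, m) \<in> (dedges G)\<^sup>*" using step.hyps(2) step.prems by (rule converse_rtrancl_into_rtrancl)
  then obtain s where s: "open_walk G True Z x p s" "(p = m \<and> s = s0) \<or> s = Some (True, False)"
    using step.IH by blast
  have "(q, p) \<in> (dedges G)\<^sup>*" using step.prems step.hyps(1) by (rule rtrancl_trans)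
  then have q: "q \<in> sc G p" using step.hyps(2) by (simp add: mem_sc_iff)
  have l: "can_leave G True Z p s Fwd q"
  proof (cases "p = m \<and> s = s0")
    case True
    then show ?thesis using leave q by simp
  next
    case False
    then show ?thesis using s(2) q by (auto simp: open_junction_def head_at_start_def)
  qed
  have e: "edge_ok G p Fwd q" and n: "q \<in> nodes G"
    using step.hyps(2) wf_hedg_dedges[OF wf] by (auto simp: edge_ok_def)
  have "open_walk G True Z x q (Some (True, False))"
    using open_walk.step[OF s(1) e n l] by (simp add: head_at_end_def)
  then show ?case by blast
qed

lemma open_walk_Bwd_within_sc:
  assumes wf: "wf_hedg G" and walk: "open_walk G True Z x y s0"
    and leave: "\<forall>p. can_leave G True Z y s0 Bwd p"
  shows "(p, y) \<in> (dedges G)\<^sup>* \<Longrightarrow> (y, p) \<in> (dedges G)\<^sup>* \<Longrightarrow>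
    \<exists>s. open_walk G True Z x p s \<and> ((p = y \<and> s = s0) \<or> s = Some (False, False))"
proof (induction rule: converse_rtrancl_induct)
  case base
  then show ?case using walk by blast
next
  case (step p p')
  have "(y, p') \<in> (dedges G)\<^sup>*" using step.prems step.hyps(1) by (rule rtrancl_into_rtrancl)
  then obtain s where s: "open_walk G True Z x p' s" "(p' = y \<and> s = s0) \<or> s = Some (False, False)"
    using step.IH by blast
  have "(p', p) \<in> (dedges G)\<^sup>*" using step.hyps(2) step.prems by (rule rtrancl_trans)
  then have p: "p' \<in> sc G p" using step.hyps(1) by (simp add: mem_sc_iff)
  have l: "can_leave G True Z p' s Bwd p"
  proof (cases "p' = y \<and> s = s0")
    case True
    then show ?thesis using leave by simp
  next
    case False
    then show ?thesis using s(2) by (auto simp: open_junction_def head_at_start_def)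
  qed
  have e: "edge_ok G p' Bwd p" and n: "p \<in> nodes G"
    using step.hyps(1) wf_hedg_dedges[OF wf] by (auto simp: edge_ok_def)
  have "open_walk G True Z x p (Some (False, False))"
    using open_walk.step[OF s(1) e n l] p by (simp add: head_at_end_def)
  then show ?case by blast
qed

lemma tracks_head: "tracks (Some (True, False)) (Some (True, b))"
  by (simp add: tracks_def)

lemma open_walk_Fwd_acy_lift:
  assumes wf: "wf_hedg G" and walk: "open_walk G True Z x y sG" and tracks: "tracks sG sA"
    and leave: "can_leave (acy G) False Z y sA Fwd w" and edge: "(y, w) \<in> dedges (acy G)"
  shows "\<exists>sG'. open_walk G True Z x w sG' \<and> tracks sG' (Some (arrival_along (acy G) y Fwd w))"
proof -
  obtain w' where w': "w' \<in> sc G w" "(y, w') \<in> dedges G" using edge by (auto simp: acy_dedge_iff)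
  have e: "edge_ok G y Fwd w'" and n: "w' \<in> nodes G"
    using w'(2) wf_hedg_dedges[OF wf] by (auto simp: edge_ok_def)
  have "can_leave G True Z y sG Fwd w'"
    using can_leave_of_can_leave_acy[OF tracks leave] open_walk_arrival[OF walk] by blast
  from open_walk.step[OF walk e n this]
  have "open_walk G True Z x w' (Some (True, False))" by (simp add: head_at_end_def)
  moreover have "\<forall>p\<in>sc G w'. can_leave G True Z w' (Some (True, False)) Fwd p"
    by (simp add: open_junction_def head_at_start_def)
  moreover have "(w', w) \<in> (dedges G)\<^sup>*" "(w, w') \<in> (dedges G)\<^sup>*" using w'(1) by (auto simp: mem_sc_iff)
  ultimately obtain sG' where "open_walk G True Z x w sG'" "sG' = Some (True, False)"
    using open_walk_Fwd_within_sc[OF wf] by blast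
  then show ?thesis using tracks_head by (auto simp: head_at_end_def)
qed

lemma open_walk_into_sc_acy_lift:
  assumes wf: "wf_hedg G" and walk: "open_walk G True Z x y sG" and tracks: "tracks sG sA"
    and leave: "can_leave (acy G) False Z y sA k w" and k: "k \<noteq> Fwd" and y': "y' \<in> sc G y"
  shows "\<exists>s. open_walk G True Z x y' s \<and> (s = Some (False, False) \<or> y' = y \<and> s = sG)
    \<and> (\<forall>k' p. (k' = Fwd \<longrightarrow> p \<in> sc G y) \<longrightarrow> can_leave G True Z y' s k' p)"
proof -
  have leave_y: "can_leave G True Z y sG k' p" if "k' = Fwd \<longrightarrow> p \<in> sc G y" for k' p
    using can_leave_of_can_leave_acy[OF tracks leave] open_walk_arrival[OF walk] k that by blast
  have "(y', y) \<in> (dedges G)\<^sup>*" "(y, y') \<in> (dedges G)\<^sup>*" using y' by (auto simp: mem_sc_iff)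
  then obtain s where s: "open_walk G True Z x y' s" "y' = y \<and> s = sG \<or> s = Some (False, False)"
    using open_walk_Bwd_within_sc[OF wf walk] leave_y by blast
  have "can_leave G True Z y' s k' p" if "k' = Fwd \<longrightarrow> p \<in> sc G y" for k' p
  proof (cases "y' = y \<and> s = sG")
    case False
    then have "s = Some (False, False)" using s(2) by blast
    then show ?thesis using that sc_eq[OF y'] by (auto simp: open_junction_def)
  qed (use leave_y that in auto)
  then show ?thesis using s by blast
qed

lemma open_walk_Bwd_acy_lift:
  assumes wf: "wf_hedg G" and walk: "open_walk G True Z x y sG" and tracks: "tracks sG sA"
    and leave: "can_leave (acy G) False Z y sA Bwd w" and edge: "(w, y) \<in> dedges (acy G)"
  shows "\<exists>sG'. open_walk G True Z x w sG' \<and> tracks sG' (Some (arrival_along (acy G) y Bwd w))"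
proof -
  obtain y' where y': "y' \<in> sc G y" "(w, y') \<in> dedges G" using edge by (auto simp: acy_dedge_iff)
  obtain s where "open_walk G True Z x y' s" and "can_leave G True Z y' s Bwd w"
    using open_walk_into_sc_acy_lift[OF wf walk tracks leave _ y'(1)] by blast
  moreover have "edge_ok G y' Bwd w" "w \<in> nodes G"
    using y'(2) wf_hedg_dedges[OF wf] by (auto simp: edge_ok_def)
  ultimately have "open_walk G True Z x w (Some (arrival_along G y' Bwd w))"
    by (intro open_walk.step)
  then show ?thesis by (auto simp: tracks_def head_at_end_def)
qed

lemma open_walk_Bi_acy_lift:
  assumes wf: "wf_hedg G" and walk: "open_walk G True Z x y sG" and tracks: "tracks sG sA"
    and leave: "can_leave (acy G) False Z y sA Bi w" and "y \<noteq> w" and edge: "{y, w} \<in> hedges (acy G)"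
  shows "\<exists>sG'. open_walk G True Z x w sG' \<and> tracks sG' (Some (arrival_along (acy G) y Bi w))"
proof -
  obtain F a b where F: "F \<in> hedges G" "a \<in> F" "b \<in> F" and "y \<in> sc G a" "w \<in> sc G b"
    using edge by (auto simp: acy_hedge_iff)
  then have a: "a \<in> sc G y" and w: "(b, w) \<in> (dedges G)\<^sup>*" "(w, b) \<in> (dedges G)\<^sup>*"
    by (auto simp: sc_sym mem_sc_iff)
  obtain s where walk_a: "open_walk G True Z x a s" and s: "s = Some (False, False) \<or> a = y \<and> s = sG"
    and leave_a: "\<forall>k' p. (k' = Fwd \<longrightarrow> p \<in> sc G y) \<longrightarrow> can_leave G True Z a s k' p"
    using open_walk_into_sc_acy_lift[OF wf walk tracks leave _ a] by blast
  have tracks_w: "tracks s' (Some (arrival_along (acy G) y Bi w))"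
    if "s' = Some (True, False) \<or> s' = Some (False, False)" for s'
    using that by (auto simp: tracks_def head_at_end_def)
  show ?thesis
  proof (cases "a = b")
    case False
    have "{a, b} \<in> hedges G" using F wf_hedg_subset_hedge[OF wf, of F "{a, b}"] by simp
    then have "edge_ok G a Bi b" using False by (simp add: edge_ok_def)
    moreover have "b \<in> nodes G" using F wf_hedg_hedge_subset[OF wf] by blast
    ultimately have "open_walk G True Z x b (Some (True, False))"
      using open_walk.step[OF walk_a, of Bi b] leave_a by (simp add: head_at_end_def)
    moreover have "\<forall>p\<in>sc G b. can_leave G True Z b (Some (True, False)) Fwd p"
      by (simp add: open_junction_def head_at_start_def)
    ultimately obtain s' where "open_walk G True Z x w s'" "s' = Some (True, False)"
      using open_walk_Fwd_within_sc[OF wf _ _ w] by blast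
    then show ?thesis using tracks_w by blast
  next
    case True
    have "\<forall>p\<in>sc G a. can_leave G True Z a s Fwd p"
      using leave_a sc_eq[OF a] by simp
    then obtain s' where s': "open_walk G True Z x w s'" "w = a \<and> s' = s \<or> s' = Some (True, False)"
      using open_walk_Fwd_within_sc[OF wf walk_a] w True by blast
    then have "s' = Some (True, False) \<or> s' = Some (False, False)"
      using s \<open>y \<noteq> w\<close> by blast
    then show ?thesis using s'(1) tracks_w by blast
  qed
qed

lemma open_walk_of_open_walk_acy:
  assumes wf: "wf_hedg G"
  shows "open_walk (acy G) False Z x y sA \<Longrightarrow> \<exists>sG. open_walk G True Z x y sG \<and> tracks sG sA"
proof (induction rule: open_walk.induct)
  case (start x)
  then show ?case by (auto intro: open_walk.start simp: tracks_def)
next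
  case (step x y sA k w)
  then obtain sG where walk: "open_walk G True Z x y sG" and tracks: "tracks sG sA" by blast
  show ?case
  proof (cases k)
    case Fwd
    then show ?thesis
      using open_walk_Fwd_acy_lift[OF wf walk tracks] step.hyps(2,4) by (simp add: edge_ok_def)
  next
    case Bwd
    then show ?thesis
      using open_walk_Bwd_acy_lift[OF wf walk tracks] step.hyps(2,4) by (simp add: edge_ok_def)
  next
    case Bi
    then show ?thesis
      using open_walk_Bi_acy_lift[OF wf walk tracks] step.hyps(2,4) by (simp add: edge_ok_def)
  qed
qed

lemma walk_sep_acy_of_walk_sep:
  assumes "wf_hedg G" "walk_sep G True X Y Z"
  shows "walk_sep (acy G) False X Y Z"
  using open_walk_of_open_walk_acy[OF assms(1)] assms(2) unfolding walk_sep_def by blast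

subsection \<open>From \<open>\<sigma>\<close>-open walks to d-open walks in the acyclification\<close>

text \<open>Invariant relating a \<open>\<sigma>\<close>-open walk of \<open>G\<close> from \<open>x\<close> to \<open>y\<close> to d-open walks of \<open>acy G\<close>. In
  tail mode some node \<open>e\<close> of the component of \<open>y\<close> is reached without an arrowhead, and can be
  passed unless the \<open>G\<close>-walk is blocked at \<open>y \<in> Z\<close> anyway. In head mode every node of the
  component is reached with an arrowhead, and a collider there can be opened: either the
  component contains an ancestor of \<open>Z\<close> in \<open>acy G\<close>, or the \<open>G\<close>-walk itself arrived at \<open>y\<close>
  with an arrowhead.\<close>

definition acy_reach_tail :: "'a hedg \<Rightarrow> 'a set \<Rightarrow> 'a \<Rightarrow> 'a \<Rightarrow> arrival option \<Rightarrow> bool" where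
  "acy_reach_tail G Z x y sG \<longleftrightarrow> (\<exists>e sA. e \<in> sc G y \<and> open_walk (acy G) False Z x e sA
     \<and> (sA = None \<or> (\<exists>b. sA = Some (False, b)))
     \<and> (sA \<noteq> None \<longrightarrow> e \<notin> Z \<or> (e = y \<and> (\<exists>h. sG = Some (h, True))))
     \<and> (sG = None \<longrightarrow> e = y \<and> sA = None))"

definition acy_reach_head :: "'a hedg \<Rightarrow> 'a set \<Rightarrow> 'a \<Rightarrow> 'a \<Rightarrow> arrival option \<Rightarrow> bool" where
  "acy_reach_head G Z x y sG \<longleftrightarrow> sG \<noteq> None
     \<and> ((\<exists>r\<in>sc G y. r \<in> anc_set (acy G) Z) \<or> (\<exists>b. sG = Some (True, b)))
     \<and> (\<forall>r\<in>sc G y. \<exists>b. open_walk (acy G) False Z x r (Some (True, b)))"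

lemma not_in_Z_of_can_leave_after_Bwd:
  "open_walk G True Z x y sG \<Longrightarrow> can_leave G True Z y sG k n \<Longrightarrow> sG = Some (h, True) \<Longrightarrow> y \<notin> Z"
  using open_walk_arrival[of G True Z x y sG h True] by (simp add: open_junction_def)

lemma acy_reach_step_within_sc:
  assumes walk: "open_walk G True Z x y sG" and leave: "can_leave G True Z y sG k n"
    and n: "n \<in> sc G y" and inv: "acy_reach_tail G Z x y sG \<or> acy_reach_head G Z x y sG"
  shows "acy_reach_tail G Z x n (Some (arrival_along G y k n)) \<or> acy_reach_head G Z x n (Some (arrival_along G y k n))"
proof (cases "acy_reach_tail G Z x y sG")
  case True
  then obtain e sA where e: "e \<in> sc G y" "open_walk (acy G) False Z x e sA"
    "sA = None \<or> (\<exists>b. sA = Some (False, b))"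
    "sA \<noteq> None \<longrightarrow> e \<notin> Z \<or> (e = y \<and> (\<exists>h. sG = Some (h, True)))"
    unfolding acy_reach_tail_def by blast
  have "sA \<noteq> None \<longrightarrow> e \<notin> Z" using e(4) not_in_Z_of_can_leave_after_Bwd[OF walk leave] by blast
  then have "acy_reach_tail G Z x n (Some (arrival_along G y k n))"
    unfolding acy_reach_tail_def using e(1-3) sc_eq[OF n] by blast
  then show ?thesis ..
next
  case False
  then have "sG \<noteq> None" and anc: "(\<exists>r\<in>sc G y. r \<in> anc_set (acy G) Z) \<or> (\<exists>b. sG = Some (True, b))"
    and heads: "\<forall>r\<in>sc G y. \<exists>b. open_walk (acy G) False Z x r (Some (True, b))"
    using inv unfolding acy_reach_head_def by blast+
  have "(\<exists>r\<in>sc G y. r \<in> anc_set (acy G) Z) \<or> head_at_end k"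
  proof (cases "head_at_start k")
    case True
    then have "sG = Some (True, b) \<Longrightarrow> y \<in> anc_set G Z" for b using leave by (simp add: open_junction_def)
    then show ?thesis using anc ex_sc_anc_set_acy[of y G Z] by blast
  next
    case False
    then show ?thesis by (cases k) (auto simp: head_at_start_def head_at_end_def)
  qed
  then have "acy_reach_head G Z x n (Some (arrival_along G y k n))"
    unfolding acy_reach_head_def using heads sc_eq[OF n] by (simp add: head_at_end_def)
  then show ?thesis ..
qed

lemma open_walk_acy_within_sc:
  assumes wf: "wf_hedg G" and y: "y \<in> nodes G" and e: "e \<in> sc G y" "e \<noteq> y"
    and walk: "open_walk (acy G) False Z x e sA" and leave: "can_leave (acy G) False Z e sA Bi y"
  shows "open_walk (acy G) False Z x y (Some (True, False))"
proof -
  have "{e, y} \<in> hedges (acy G)"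
    using acy_hedge_of_sc[OF wf_hedg_singleton_hedge[OF wf y] _ _ e(1) sc_refl[of y G]] by simp
  then have "edge_ok (acy G) e Bi y" using e(2) by (simp add: edge_ok_def)
  then show ?thesis using open_walk.step[OF walk _ _ leave] y by (simp add: head_at_end_def)
qed

lemma acy_walk_into_sc_leaving_with_tail:
  assumes walk: "open_walk G True Z x y sG" and leave: "can_leave G True Z y sG k n"
    and "head_at_start k" and "head_at_start k'"
    and inv: "acy_reach_tail G Z x y sG \<or> acy_reach_head G Z x y sG"
  shows "\<exists>u sU. u \<in> sc G y \<and> open_walk (acy G) False Z x u sU \<and> can_leave (acy G) False Z u sU k' r"
proof (cases "acy_reach_tail G Z x y sG")
  case True
  then obtain e sA where e: "e \<in> sc G y" "open_walk (acy G) False Z x e sA"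
    "sA = None \<or> (\<exists>b. sA = Some (False, b))"
    "sA \<noteq> None \<longrightarrow> e \<notin> Z \<or> (e = y \<and> (\<exists>h. sG = Some (h, True)))"
    unfolding acy_reach_tail_def by blast
  have "sA \<noteq> None \<longrightarrow> e \<notin> Z" using e(4) not_in_Z_of_can_leave_after_Bwd[OF walk leave] by blast
  then have "can_leave (acy G) False Z e sA k' r" using e(3) by (auto simp: open_junction_def)
  then show ?thesis using e(1,2) by blast
next
  case False
  then have anc: "(\<exists>r\<in>sc G y. r \<in> anc_set (acy G) Z) \<or> (\<exists>b. sG = Some (True, b))"
    and heads: "\<forall>r\<in>sc G y. \<exists>b. open_walk (acy G) False Z x r (Some (True, b))"
    using inv unfolding acy_reach_head_def by blast+
  have "sG = Some (True, b) \<Longrightarrow> y \<in> anc_set G Z" for b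
    using leave \<open>head_at_start k\<close> by (simp add: open_junction_def)
  then obtain u where u: "u \<in> sc G y" "u \<in> anc_set (acy G) Z"
    using anc ex_sc_anc_set_acy[of y G Z] by blast
  moreover obtain b where "open_walk (acy G) False Z x u (Some (True, b))" using heads u(1) by blast
  moreover have "can_leave (acy G) False Z u (Some (True, b)) k' r"
    using u(2) \<open>head_at_start k'\<close> by (simp add: open_junction_def)
  ultimately show ?thesis by blast
qed

lemma acy_walk_leaving_Fwd:
  assumes wf: "wf_hedg G" and walk: "open_walk G True Z x y sG" and leave: "can_leave G True Z y sG Fwd n"
    and n: "n \<notin> sc G y" and inv: "acy_reach_tail G Z x y sG \<or> acy_reach_head G Z x y sG"
  shows "\<exists>sY. open_walk (acy G) False Z x y sY \<and> (\<forall>r. can_leave (acy G) False Z y sY Fwd r)"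
proof -
  have y_Z: "y \<notin> Z" if "sG \<noteq> None"
    using leave n that by (cases sG) (auto simp: open_junction_def head_at_start_def)
  have y: "y \<in> nodes G" using open_walk_nodes[OF walk] by simp
  show ?thesis
  proof (cases "acy_reach_tail G Z x y sG")
    case True
    then obtain e sA where e: "e \<in> sc G y" "open_walk (acy G) False Z x e sA"
      "sA = None \<or> (\<exists>b. sA = Some (False, b))"
      "sA \<noteq> None \<longrightarrow> e \<notin> Z \<or> (e = y \<and> (\<exists>h. sG = Some (h, True)))"
      "sG = None \<longrightarrow> e = y \<and> sA = None"
      unfolding acy_reach_tail_def by blast
    show ?thesis
    proof (cases "e = y")
      case True
      then have "can_leave (acy G) False Z y sA Fwd r" for r
        using e(3,5) y_Z by (cases sA) (auto simp: open_junction_def)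
      then show ?thesis using e(2) True by blast
    next
      case False
      have "can_leave (acy G) False Z e sA Bi y"
        using e(3,4) False by (auto simp: open_junction_def)
      then have "open_walk (acy G) False Z x y (Some (True, False))"
        by (rule open_walk_acy_within_sc[OF wf y e(1) False e(2)])
      moreover have "can_leave (acy G) False Z y (Some (True, False)) Fwd r" for r
        using y_Z e(5) False by (simp add: open_junction_def head_at_start_def)
      ultimately show ?thesis by blast
    qed
  next
    case False
    then have "sG \<noteq> None" and heads: "\<forall>r\<in>sc G y. \<exists>b. open_walk (acy G) False Z x r (Some (True, b))"
      using inv unfolding acy_reach_head_def by blast+
    then obtain b where "open_walk (acy G) False Z x y (Some (True, b))" using sc_refl[of y G] by blast
    moreover have "can_leave (acy G) False Z y (Some (True, b)) Fwd r" for r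
      using y_Z \<open>sG \<noteq> None\<close> by (simp add: open_junction_def head_at_start_def)
    ultimately show ?thesis by blast
  qed
qed

lemma acy_reach_head_across_Fwd:
  assumes wf: "wf_hedg G" and walk: "open_walk G True Z x y sG" and edge: "(y, n) \<in> dedges G"
    and n: "n \<in> nodes G" and leave: "can_leave G True Z y sG Fwd n" and across: "n \<notin> sc G y"
    and inv: "acy_reach_tail G Z x y sG \<or> acy_reach_head G Z x y sG"
  shows "acy_reach_head G Z x n (Some (True, False))"
proof -
  obtain sY where sY: "open_walk (acy G) False Z x y sY" "\<forall>r. can_leave (acy G) False Z y sY Fwd r"
    using acy_walk_leaving_Fwd[OF wf walk leave across inv] by blast
  have "\<exists>b. open_walk (acy G) False Z x r (Some (True, b))" if r: "r \<in> sc G n" for r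
  proof -
    have "edge_ok (acy G) y Fwd r"
      using acy_dedge_from_sc[OF edge across r] by (simp add: edge_ok_def)
    moreover have "r \<in> nodes G" using sc_subset_nodes[OF wf n] r by blast
    ultimately have "open_walk (acy G) False Z x r (Some (arrival_along (acy G) y Fwd r))"
      using sY(2) by (intro open_walk.step[OF sY(1)]) auto
    then show ?thesis by (auto simp: head_at_end_def)
  qed
  then show ?thesis by (auto simp: acy_reach_head_def)
qed

lemma acy_reach_head_across_Bi:
  assumes wf: "wf_hedg G" and walk: "open_walk G True Z x y sG" and edge: "{y, n} \<in> hedges G"
    and n: "n \<in> nodes G" and leave: "can_leave G True Z y sG Bi n" and across: "n \<notin> sc G y"
    and inv: "acy_reach_tail G Z x y sG \<or> acy_reach_head G Z x y sG"
  shows "acy_reach_head G Z x n (Some (True, False))"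
proof -
  have "\<exists>b. open_walk (acy G) False Z x r (Some (True, b))" if r: "r \<in> sc G n" for r
  proof -
    obtain u sU where u: "u \<in> sc G y" "open_walk (acy G) False Z x u sU" "can_leave (acy G) False Z u sU Bi r"
      using acy_walk_into_sc_leaving_with_tail[OF walk leave _ _ inv, of Bi r]
      by (auto simp: head_at_start_def)
    have "{u, r} \<in> hedges (acy G)" using acy_hedge_of_sc[OF edge _ _ u(1) r] by simp
    then have "edge_ok (acy G) u Bi r" using sc_disjoint[OF across u(1) r] by (simp add: edge_ok_def)
    moreover have "r \<in> nodes G" using sc_subset_nodes[OF wf n] r by blast
    ultimately show ?thesis using open_walk.step[OF u(2) _ _ u(3)] by (auto simp: head_at_end_def)
  qed
  then show ?thesis by (auto simp: acy_reach_head_def)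
qed

lemma acy_reach_tail_across_Bwd:
  assumes walk: "open_walk G True Z x y sG" and edge: "(n, y) \<in> dedges G"
    and n: "n \<in> nodes G" and leave: "can_leave G True Z y sG Bwd n" and across: "n \<notin> sc G y"
    and inv: "acy_reach_tail G Z x y sG \<or> acy_reach_head G Z x y sG"
  shows "acy_reach_tail G Z x n (Some (False, True))"
proof -
  obtain u sU where u: "u \<in> sc G y" "open_walk (acy G) False Z x u sU" "can_leave (acy G) False Z u sU Bwd n"
    using acy_walk_into_sc_leaving_with_tail[OF walk leave _ _ inv, of Bwd n]
    by (auto simp: head_at_start_def)
  have "edge_ok (acy G) u Bwd n"
    using acy_dedge_into_sc[OF edge across u(1)] by (simp add: edge_ok_def)
  moreover have "n \<in> nodes (acy G)" using n by simp
  ultimately have "open_walk (acy G) False Z x n (Some (arrival_along (acy G) u Bwd n))"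
    using open_walk.step[OF u(2) _ _ u(3)] by blast
  then show ?thesis
    unfolding acy_reach_tail_def using sc_refl[of n G]
    by (intro exI[of _ n] exI[of _ "Some (arrival_along (acy G) u Bwd n)"]) (auto simp: head_at_end_def)
qed

lemma acy_reach_of_open_walk:
  assumes wf: "wf_hedg G"
  shows "open_walk G True Z x y sG \<Longrightarrow> acy_reach_tail G Z x y sG \<or> acy_reach_head G Z x y sG"
proof (induction rule: open_walk.induct)
  case (start x)
  then have "open_walk (acy G) False Z x x None" by (simp add: open_walk.start)
  then show ?case unfolding acy_reach_tail_def using sc_refl[of x G] by blast
next
  case (step x y sG k n)
  show ?case
  proof (cases "n \<in> sc G y")
    case True
    then show ?thesis using acy_reach_step_within_sc[OF step.hyps(1,4) _ step.IH] by blast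
  next
    case False
    then have "y \<notin> sc G n" by (simp add: sc_sym)
    then show ?thesis
      using acy_reach_head_across_Fwd[OF wf step.hyps(1) _ step.hyps(3) _ False step.IH]
        acy_reach_head_across_Bi[OF wf step.hyps(1) _ step.hyps(3) _ False step.IH]
        acy_reach_tail_across_Bwd[OF step.hyps(1) _ step.hyps(3) _ False step.IH]
        step.hyps(2,4)
      by (cases k) (auto simp: edge_ok_def head_at_end_def)
  qed
qed

lemma open_walk_acy_of_acy_reach:
  assumes wf: "wf_hedg G" and y: "y \<in> nodes G"
    and inv: "acy_reach_tail G Z x y sG \<or> acy_reach_head G Z x y sG"
  shows "\<exists>sA. open_walk (acy G) False Z x y sA"
proof (cases "acy_reach_tail G Z x y sG")
  case True
  then obtain e sA where e: "e \<in> sc G y" "open_walk (acy G) False Z x e sA"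
    "sA = None \<or> (\<exists>b. sA = Some (False, b))"
    "sA \<noteq> None \<longrightarrow> e \<notin> Z \<or> e = y"
    unfolding acy_reach_tail_def by blast
  show ?thesis
  proof (cases "e = y")
    case False
    have "can_leave (acy G) False Z e sA Bi y"
      using e(3,4) False by (auto simp: open_junction_def)
    then show ?thesis using open_walk_acy_within_sc[OF wf y e(1) False e(2)] by blast
  qed (use e(2) in blast)
next
  case False
  then show ?thesis using inv sc_refl[of y G] unfolding acy_reach_head_def by blast
qed

lemma walk_sep_acy_iff:
  assumes wf: "wf_hedg G"
  shows "walk_sep (acy G) False X Y Z \<longleftrightarrow> walk_sep G True X Y Z"
proof
  assume sep: "walk_sep (acy G) False X Y Z"
  show "walk_sep G True X Y Z"
    unfolding walk_sep_def
  proof (intro ballI allI notI)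
    fix x y s assume "x \<in> X - Z" "y \<in> Y - Z" and walk: "open_walk G True Z x y s"
    moreover obtain sA where "open_walk (acy G) False Z x y sA"
      using open_walk_acy_of_acy_reach[OF wf _ acy_reach_of_open_walk[OF wf walk]]
        open_walk_nodes[OF walk] by blast
    ultimately show False using sep unfolding walk_sep_def by blast
  qed
qed (use walk_sep_acy_of_walk_sep[OF wf] in blast)

subsection \<open>The directed graph \<open>acag\<close>\<close>

lemma acag_nodes [simp]: "nodes (acag G) = nodes (acy (aug G))"
  unfolding acag_def by simp

lemma acag_dedges [simp]: "dedges (acag G) = dedges (acy (aug G))"
  unfolding acag_def by simp

lemma acag_no_bidirected_edge: "\<not> edge_ok (acag G) a Bi b"
  unfolding edge_ok_def acag_def singleton_complex_def by auto

lemma sc_acag: "sc (acag G) = sc (acy (aug G))"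
  by (rule sc_cong_dedges) simp

lemma anc_set_acag: "anc_set (acag G) = anc_set (acy (aug G))"
  by (rule anc_set_cong_dedges) simp

lemma can_leave_acag: "can_leave (acag G) sig Z v s k w \<longleftrightarrow> can_leave (acy (aug G)) sig Z v s k w"
  unfolding can_leave_def open_junction_def sc_acag anc_set_acag ..

lemma open_walk_acy_aug_of_open_walk_acag:
  "open_walk (acag G) sig Z a b s \<Longrightarrow> open_walk (acy (aug G)) sig Z a b s"
proof (induction rule: open_walk.induct)
  case (start x)
  then show ?case by (simp add: open_walk.start)
next
  case (step x y s k w)
  have "k \<noteq> Bi" using step.hyps(2) acag_no_bidirected_edge by metis
  then have "edge_ok (acy (aug G)) y k w" using step.hyps(2) by (cases k) (auto simp: edge_ok_def)
  moreover have "can_leave (acy (aug G)) sig Z y s k w" using step.hyps(4) by (simp add: can_leave_acag)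
  ultimately show ?case
    using open_walk.step[OF step.IH] step.hyps(3) by (simp add: sc_acag)
qed

lemma acy_aug_bidirected_edge:
  assumes "{a, b} \<in> hedges (acy (aug G))" "a \<noteq> b"
  shows "\<exists>y w. a = Inl y \<and> b = Inl w \<and> w \<in> sc G y"
proof -
  obtain F where F: "F \<in> hedges (aug G)" "{a, b} \<subseteq> (\<Union>v\<in>F. sc (aug G) v)"
    using assms(1) unfolding acy_hedge_iff by blast
  then have single: "\<forall>u\<in>F. \<forall>v\<in>F. u = v" unfolding aug_hedges singleton_complex_def by blast
  obtain u u' where "u \<in> F" "a \<in> sc (aug G) u" "u' \<in> F" "b \<in> sc (aug G) u'" using F(2) by blast
  then have u: "a \<in> sc (aug G) u" "b \<in> sc (aug G) u" using single by auto
  show ?thesis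
  proof (cases u)
    case (Inl u0)
    then obtain y w where yw: "a = Inl y" "y \<in> sc G u0" "b = Inl w" "w \<in> sc G u0"
      using u by (auto simp: sc_aug_Inl)
    have "w \<in> sc G y" using yw(4) sc_eq[OF yw(2)] by simp
    then show ?thesis using yw by blast
  next
    case (Inr F0)
    then show ?thesis using u assms(2) by (simp add: sc_aug_Inr)
  qed
qed

text \<open>In \<open>acag G\<close> a bidirected edge \<open>Inl y \<leftrightarrow> Inl w\<close> of \<open>acy (aug G)\<close>, which lies inside a strongly
  connected component, is replaced by \<open>Inl y \<leftarrow> e\<^sub>F \<rightarrow> Inl w\<close> for a maximal hyperedge \<open>F \<ni> y\<close>.\<close>

lemma open_walk_acag_of_open_walk_acy_aug:
  assumes wf: "wf_hedg G"
  shows "open_walk (acy (aug G)) False (Inl ` Z) a b s \<Longrightarrow> open_walk (acag G) False (Inl ` Z) a b s"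
proof (induction rule: open_walk.induct)
  case (start x)
  then show ?case by (simp add: open_walk.start)
next
  case (step x y s k w)
  have w: "w \<in> nodes (acag G)" using step.hyps(3) by simp
  have leave: "can_leave (acag G) False (Inl ` Z) y s k w" using step.hyps(4) by (simp add: can_leave_acag)
  show ?case
  proof (cases "k = Bi")
    case False
    then have "edge_ok (acag G) y k w" using step.hyps(2) by (cases k) (auto simp: edge_ok_def)
    then show ?thesis using open_walk.step[OF step.IH _ w leave] by (simp add: sc_acag)
  next
    case True
    then have "{y, w} \<in> hedges (acy (aug G))" "y \<noteq> w" using step.hyps(2) by (auto simp: edge_ok_def)
    then obtain y0 w0 where yw: "y = Inl y0" "w = Inl w0" "w0 \<in> sc G y0"
      using acy_aug_bidirected_edge by blast
    have "y0 \<in> nodes G" using open_walk_nodes[OF step.hyps(1)] yw(1) by simp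
    then obtain F where F: "F \<in> maxhedges G" "y0 \<in> F"
      using ex_maxhedge_superset[OF wf_hedg_finite_hedges[OF wf] wf_hedg_singleton_hedge[OF wf]] by blast
    have y0: "y0 \<in> sc G y0" "y0 \<in> sc G w0" using yw(3) sc_refl[of y0 G] by (auto simp: sc_sym)
    have e1: "edge_ok (acag G) y Bwd (Inr F)" and e2: "edge_ok (acag G) (Inr F) Fwd w"
      using F y0 yw by (auto simp: edge_ok_def acy_dedge_iff sc_aug_Inl sc_aug_Inr)
    have "Inr F \<in> nodes (acag G)" using F(1) by simp
    moreover have "can_leave (acag G) False (Inl ` Z) y s Bwd (Inr F)"
      using leave True by (cases s) (auto simp: open_junction_def head_at_start_def)
    ultimately have "open_walk (acag G) False (Inl ` Z) x (Inr F) (Some (arrival_along (acag G) y Bwd (Inr F)))"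
      by (rule open_walk.step[OF step.IH e1])
    moreover have "can_leave (acag G) False (Inl ` Z) (Inr F) (Some (arrival_along (acag G) y Bwd (Inr F))) Fwd w"
      by (simp add: open_junction_def head_at_end_def)
    ultimately show ?thesis using open_walk.step[OF _ e2 w] True by (simp add: head_at_end_def)
  qed
qed

lemma walk_sep_acag_iff:
  assumes wf: "wf_hedg G"
  shows "walk_sep (acag G) False (Inl ` X) (Inl ` Y) (Inl ` Z)
    \<longleftrightarrow> walk_sep (acy (aug G)) False (Inl ` X) (Inl ` Y) (Inl ` Z)"
  unfolding walk_sep_def
  using open_walk_acy_aug_of_open_walk_acag open_walk_acag_of_open_walk_acy_aug[OF wf] by metis

theorem mainTheorem7:
  fixes G :: "'a hedg" and X Y Z :: "'a set"
  assumes "wf_hedg G"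
    and "X \<subseteq> nodes G" and "Y \<subseteq> nodes G" and "Z \<subseteq> nodes G"
  shows "(sigma_sep G X Y Z \<longleftrightarrow> sigma_sep (aug G) (Inl ` X) (Inl ` Y) (Inl ` Z))
    \<and> (sigma_sep G X Y Z \<longleftrightarrow> d_sep (acy G) X Y Z)
    \<and> (sigma_sep G X Y Z \<longleftrightarrow> d_sep (acag G) (Inl ` X) (Inl ` Y) (Inl ` Z))
    \<and> (sigma_sep G X Y Z \<longleftrightarrow> d_sep (acy (aug G)) (Inl ` X) (Inl ` Y) (Inl ` Z))
    \<and> (sigma_sep G X Y Z \<longleftrightarrow> d_sep (aug (acy G)) (Inl ` X) (Inl ` Y) (Inl ` Z))"
proof -
  note wf = \<open>wf_hedg G\<close>
  have aug: "walk_sep (aug G) True (Inl ` X) (Inl ` Y) (Inl ` Z) \<longleftrightarrow> walk_sep G True X Y Z"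
    by (rule walk_sep_aug_iff[OF wf])
  have acy: "walk_sep (acy G) False X Y Z \<longleftrightarrow> walk_sep G True X Y Z"
    by (rule walk_sep_acy_iff[OF wf])
  have acy_aug: "walk_sep (acy (aug G)) False (Inl ` X) (Inl ` Y) (Inl ` Z) \<longleftrightarrow> walk_sep G True X Y Z"
    using walk_sep_acy_iff[OF wf_hedg_aug[OF wf]] aug by simp
  have aug_acy: "walk_sep (aug (acy G)) False (Inl ` X) (Inl ` Y) (Inl ` Z) \<longleftrightarrow> walk_sep G True X Y Z"
    using walk_sep_aug_iff[OF wf_hedg_acy[OF wf]] acy by simp
  show ?thesis
    unfolding sigma_sep_iff_walk_sep d_sep_iff_walk_sep walk_sep_acag_iff[OF wf]
    using aug acy acy_aug aug_acy by simp
qed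

end
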